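(* Let $\mathcal{Q}=\mathcal{Q}_\ell(T,X,Y)\subseteq\mathcal{P}_\ell(T,X)$. For all $\alpha,\beta\in\mathcal{Q}$, $\alpha\,\sigma^{\mathcal{Q}}\,\beta$ if and only if $\alpha\,\sigma^{\mathcal{P}}\,\beta$, where $\sigma^{\mathcal{P}}$ is the least monoid congruence on $\mathcal{P}_\ell(T,X)$ containing $X\times X$ and $\sigma^{\mathcal{Q}}$ is the least monoid congruence on $\mathcal{Q}$ containing $Y\times Y$.
   Context: Let $T$ be a monoid, $X$ a semilattice with identity $1_X$ (ordered by $e\le f$ iff $ef=e$) with an order-preserving left action of $T$. $\mathcal{P}_\ell(T,X)$: let $T*X$ be the semigroup free product acting on $X$ (elements of $X$ act by multiplication), $\omega^+=\omega\cdot1_X$, $\sim$ the semigroup congruence generated by $\{(\alpha^+\alpha,\alpha)\}\cup\{(1_T,1_X)\}$, and $\mathcal{P}_\ell(T,X)=(T*X)/\sim$ with $[\alpha]^+=[\alpha^+]$; $X$, $T$ are identified with their injective images. It is known to be a left Ehresmann monoid with projections $X$ in which every $\sigma^{\mathcal{P}}$-class contains exactly one element of $T$. Let $Y$ be a subsemilattice of $X$ having an identity, satisfying (A): for all $t\in T$, $e,f\in Y$ with $e\le f$, $t\cdot f\in Y$ implies $t\cdot e\in Y$; (B): for all $t\in T$ there is $g\in Y$ with $t\cdot g\in Y$. $H^{\mathcal{Q}}=\{te:t\in T,e\in Y,t\cdot e\in Y\}$, and $\mathcal{Q}_\ell(T,X,Y)$ is the subsemigroup of $\mathcal{P}_\ell(T,X)$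 generated by $H^{\mathcal{Q}}$; it is a monoid with identity the identity of $Y$. *)

theory Defs
  imports Main
begin

definition congruence_on :: "'m set \<Rightarrow> ('m \<Rightarrow> 'm \<Rightarrow> 'm) \<Rightarrow> 'm rel \<Rightarrow> bool" where
  "congruence_on M f \<rho> \<longleftrightarrow> equiv M \<rho> \<and>
     (\<forall>a b c. (a, b) \<in> \<rho> \<and> c \<in> M \<longrightarrow> (f c a, f c b) \<in> \<rho> \<and> (f a c, f b c) \<in> \<rho>)"

definition least_congruence :: "'m set \<Rightarrow> ('m \<Rightarrow> 'm \<Rightarrow> 'm) \<Rightarrow> 'm rel \<Rightarrow> 'm rel" where
  "least_congruence M f R = \<Inter>{\<rho>. congruence_on M f \<rho> \<and> R \<subseteq> \<rho>}"

text \<open>Words of the free semigroup on the disjoint union of T and X.\<close>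

definition words :: "('a + 'x) list set" where
  "words = {w. w \<noteq> []}"

fun word_act :: "('a \<Rightarrow> 'x \<Rightarrow> 'x) \<Rightarrow> ('a + 'x::semilattice_inf) list \<Rightarrow> 'x \<Rightarrow> 'x" where
  "word_act act [] x = x"
| "word_act act (Inl t # w) x = act t (word_act act w x)"
| "word_act act (Inr e # w) x = inf e (word_act act w x)"

definition word_plus :: "('a \<Rightarrow> 'x \<Rightarrow> 'x) \<Rightarrow> ('a + 'x::bounded_semilattice_inf_top) list \<Rightarrow> 'x" where
  "word_plus act w = word_act act w top"

text \<open>Generating pairs: the defining relations of the semigroup free product T*X
(as a quotient of the free semigroup), plus (alpha^+ alpha, alpha) and (1_T, 1_X).\<close>

definition gens :: "('a::monoid_mult \<Rightarrow> 'x \<Rightarrow> 'x) \<Rightarrow> (('a + 'x::bounded_semilattice_inf_top) list) rel" where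
  "gens act =
     {([Inl s, Inl t], [Inl (s * t)]) | s t. True}
   \<union> {([Inr e, Inr f], [Inr (inf e f)]) | e f. True}
   \<union> {(Inr (word_plus act w) # w, w) | w. w \<noteq> []}
   \<union> {([Inl 1], [Inr top])}"

definition simP :: "('a::monoid_mult \<Rightarrow> 'x \<Rightarrow> 'x) \<Rightarrow> (('a + 'x::bounded_semilattice_inf_top) list) rel" where
  "simP act = least_congruence words (@) (gens act)"

definition Pcar :: "('a::monoid_mult \<Rightarrow> 'x \<Rightarrow> 'x) \<Rightarrow> ('a + 'x::bounded_semilattice_inf_top) list set set" where
  "Pcar act = words // simP act"

definition pmult :: "('a::monoid_mult \<Rightarrow> 'x \<Rightarrow> 'x) \<Rightarrow> ('a + 'x::bounded_semilattice_inf_top) list set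
     \<Rightarrow> ('a + 'x) list set \<Rightarrow> ('a + 'x) list set" where
  "pmult act A B = simP act `` {a @ b | a b. a \<in> A \<and> b \<in> B}"

definition embT :: "('a::monoid_mult \<Rightarrow> 'x \<Rightarrow> 'x) \<Rightarrow> 'a \<Rightarrow> ('a + 'x::bounded_semilattice_inf_top) list set" where
  "embT act t = simP act `` {[Inl t]}"

definition embX :: "('a::monoid_mult \<Rightarrow> 'x \<Rightarrow> 'x) \<Rightarrow> 'x \<Rightarrow> ('a + 'x::bounded_semilattice_inf_top) list set" where
  "embX act e = simP act `` {[Inr e]}"

definition HQ :: "('a::monoid_mult \<Rightarrow> 'x \<Rightarrow> 'x) \<Rightarrow> 'x set \<Rightarrow> ('a + 'x::bounded_semilattice_inf_top) list set set" where
  "HQ act Y = {pmult act (embT act t) (embX act e) | t e. e \<in> Y \<and> act t e \<in> Y}"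

definition Qcar :: "('a::monoid_mult \<Rightarrow> 'x \<Rightarrow> 'x) \<Rightarrow> 'x set \<Rightarrow> ('a + 'x::bounded_semilattice_inf_top) list set set" where
  "Qcar act Y = \<Inter>{S. HQ act Y \<subseteq> S \<and> (\<forall>a\<in>S. \<forall>b\<in>S. pmult act a b \<in> S)}"

definition sigmaP :: "('a::monoid_mult \<Rightarrow> 'x \<Rightarrow> 'x) \<Rightarrow> (('a + 'x::bounded_semilattice_inf_top) list set) rel" where
  "sigmaP act = least_congruence (Pcar act) (pmult act) {(embX act e, embX act f) | e f. True}"

definition sigmaQ :: "('a::monoid_mult \<Rightarrow> 'x \<Rightarrow> 'x) \<Rightarrow> 'x set \<Rightarrow> (('a + 'x::bounded_semilattice_inf_top) list set) rel" where
  "sigmaQ act Y = least_congruence (Qcar act Y) (pmult act)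
     {(embX act e, embX act f) | e f. e \<in> Y \<and> f \<in> Y}"

end

theory Submission
  imports Defs
begin

(*
  Every element of Q is \<sigma>\<^sup>Q-related to a generator te with e, t\<cdot>e \<in> Y: for a
  product te \<cdot> sf choose h \<le> f with s\<cdot>h, (ts)\<cdot>h \<in> Y (conditions (A) and (B)); then
  te \<cdot> sf is related to t(s\<cdot>h) \<cdot> sh = (ts)h. Generators with the same t are related,
  since te = te \<cdot> e \<sigma>\<^sup>Q te \<cdot> f = t(ef). Conversely \<sigma>\<^sup>P only identifies
  elements with the same image under the morphism P \<rightarrow> T that collapses X, so
  \<sigma>\<^sup>P-related generators share their t. Finally \<sigma>\<^sup>Q \<subseteq> \<sigma>\<^sup>P because
  \<sigma>\<^sup>P restricted to Q is a congruence on Q containing Y \<times> Y.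
*)

lemma least_congruence_minimal:
  "congruence_on M f \<rho> \<Longrightarrow> R \<subseteq> \<rho> \<Longrightarrow> least_congruence M f R \<subseteq> \<rho>"
  unfolding least_congruence_def by blast

lemma least_congruence_contains: "R \<subseteq> least_congruence M f R"
  unfolding least_congruence_def by blast

lemma equiv_Inter:
  assumes "F \<noteq> {}" "\<And>\<rho>. \<rho> \<in> F \<Longrightarrow> equiv M \<rho>"
  shows "equiv M (\<Inter>F)"
proof (rule equivI)
  show "\<Inter>F \<subseteq> M \<times> M"
    using assms equiv_type by blast
  show "refl_on M (\<Inter>F)"
    using assms by (auto simp: refl_on_def equiv_def)
  show "sym (\<Inter>F)"
    using assms by (auto simp: sym_def equiv_def)
  show "trans (\<Inter>F)"
    using assms unfolding equiv_def trans_def by blast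
qed

lemma congruence_on_equiv: "congruence_on M f \<rho> \<Longrightarrow> equiv M \<rho>"
  unfolding congruence_on_def by blast

lemma congruence_on_Inter:
  assumes "F \<noteq> {}" "\<And>\<rho>. \<rho> \<in> F \<Longrightarrow> congruence_on M f \<rho>"
  shows "congruence_on M f (\<Inter>F)"
proof -
  have "equiv M (\<Inter>F)"
    using assms by (blast intro: equiv_Inter congruence_on_equiv)
  then show ?thesis
    using assms unfolding congruence_on_def by blast
qed

lemma congruence_on_full:
  "(\<And>a b. a \<in> M \<Longrightarrow> b \<in> M \<Longrightarrow> f a b \<in> M) \<Longrightarrow> congruence_on M f (M \<times> M)"
  unfolding congruence_on_def equiv_def refl_on_def sym_def trans_def by auto

lemma congruence_on_least_congruence:
  assumes "\<And>a b. a \<in> M \<Longrightarrow> b \<in> M \<Longrightarrow> f a b \<in> M" and "R \<subseteq> M \<times> M"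
  shows "congruence_on M f (least_congruence M f R)"
proof -
  have "M \<times> M \<in> {\<rho>. congruence_on M f \<rho> \<and> R \<subseteq> \<rho>}"
    using assms by (simp add: congruence_on_full)
  then show ?thesis
    unfolding least_congruence_def by (intro congruence_on_Inter) blast+
qed

lemma congruence_on_restrict:
  assumes "congruence_on M f \<rho>" "N \<subseteq> M" "\<And>a b. a \<in> N \<Longrightarrow> b \<in> N \<Longrightarrow> f a b \<in> N"
  shows "congruence_on N f (\<rho> \<inter> N \<times> N)"
proof -
  have "equiv N (\<rho> \<inter> N \<times> N)"
    using congruence_on_equiv[OF assms(1)] assms(2)
    unfolding equiv_def refl_on_def sym_def trans_def by blast
  then show ?thesis
    using assms unfolding congruence_on_def by blast
qed

lemma congruence_on_kernel:
  assumes "\<And>a b. a \<in> M \<Longrightarrow> b \<in> M \<Longrightarrow> f a b \<in> M"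
    and "\<And>a b. a \<in> M \<Longrightarrow> b \<in> M \<Longrightarrow> h (f a b) = g (h a) (h b)"
  shows "congruence_on M f {(a, b). a \<in> M \<and> b \<in> M \<and> h a = h b}"
  using assms unfolding congruence_on_def equiv_def refl_on_def sym_def trans_def by auto

lemma congruence_on_compat:
  assumes cong: "congruence_on M f \<rho>" and "(a, a') \<in> \<rho>" "(b, b') \<in> \<rho>"
  shows "(f a b, f a' b') \<in> \<rho>"
proof -
  have eq: "equiv M \<rho>" using cong by (rule congruence_on_equiv)
  then have "a \<in> M" "b' \<in> M" using assms(2,3) equiv_type by blast+
  then have "(f a b, f a b') \<in> \<rho>" "(f a b', f a' b') \<in> \<rho>"
    using cong assms(2,3) unfolding congruence_on_def by blast+
  then show ?thesis using eq unfolding equiv_def trans_def by blast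
qed

lemma least_congruence_subset_restrict:
  assumes "congruence_on M f \<rho>" "N \<subseteq> M" "\<And>a b. a \<in> N \<Longrightarrow> b \<in> N \<Longrightarrow> f a b \<in> N"
    and "R \<subseteq> \<rho> \<inter> N \<times> N"
  shows "least_congruence N f R \<subseteq> \<rho>"
  using least_congruence_minimal[OF congruence_on_restrict[OF assms(1-3)] assms(4)] by blast

fun t_proj :: "('a::monoid_mult + 'x) list \<Rightarrow> 'a" where
  "t_proj [] = 1"
| "t_proj (Inl t # w) = t * t_proj w"
| "t_proj (Inr e # w) = t_proj w"

lemma t_proj_append: "t_proj (u @ v) = t_proj u * t_proj v"
  by (induction u rule: t_proj.induct) (simp_all add: mult.assoc)

(* Only meaningful on elements of P, where t_proj is constant; the_elem is junk otherwise. *)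
definition class_t_proj :: "('a::monoid_mult + 'x) list set \<Rightarrow> 'a" where
  "class_t_proj A = the_elem (t_proj ` A)"

lemma append_in_words: "u \<in> words \<Longrightarrow> v \<in> words \<Longrightarrow> u @ v \<in> words"
  by (simp add: words_def)

context
  fixes act :: "'a::monoid_mult \<Rightarrow> 'x::bounded_semilattice_inf_top \<Rightarrow> 'x"
begin

definition pclass :: "('a + 'x) list \<Rightarrow> ('a + 'x) list set" where
  "pclass w = simP act `` {w}"

lemma simP_congruence: "congruence_on words (@) (simP act)"
  unfolding simP_def
  by (rule congruence_on_least_congruence) (auto simp: append_in_words gens_def words_def)

lemma simP_equiv: "equiv words (simP act)"
  using simP_congruence by (rule congruence_on_equiv)

lemma simP_in_context: "(u, v) \<in> simP act \<Longrightarrow> (p @ u @ q, p @ v @ q) \<in> simP act"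
proof -
  assume uv: "(u, v) \<in> simP act"
  have "(w, w) \<in> simP act" if "w \<in> words" for w
    using simP_equiv that by (auto simp: equiv_def refl_on_def)
  then show ?thesis
    using uv congruence_on_compat[OF simP_congruence]
    by (cases "p = []"; cases "q = []") (auto simp: words_def)
qed

lemma pclass_eqI: "(u, v) \<in> simP act \<Longrightarrow> pclass u = pclass v"
  unfolding pclass_def using simP_equiv by (rule equiv_class_eq)

lemma pclass_self: "w \<in> words \<Longrightarrow> w \<in> pclass w"
  unfolding pclass_def using simP_equiv by (rule equiv_class_self)

lemma pmult_pclass:
  assumes "u \<in> words" "v \<in> words"
  shows "pmult act (pclass u) (pclass v) = pclass (u @ v)"
proof -
  have "(u @ v, u' @ v') \<in> simP act" if "u' \<in> pclass u" "v' \<in> pclass v" for u' v'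
    using that congruence_on_compat[OF simP_congruence] unfolding pclass_def by blast
  then show ?thesis
    using pclass_self[OF assms(1)] pclass_self[OF assms(2)] simP_equiv
    unfolding pmult_def pclass_def equiv_def sym_def trans_def by blast
qed

lemma Pcar_eq: "Pcar act = pclass ` words"
  unfolding Pcar_def quotient_def pclass_def by blast

lemma pclass_in_Pcar: "w \<in> words \<Longrightarrow> pclass w \<in> Pcar act"
  unfolding Pcar_eq by blast

lemma pmult_in_Pcar: "A \<in> Pcar act \<Longrightarrow> B \<in> Pcar act \<Longrightarrow> pmult act A B \<in> Pcar act"
  unfolding Pcar_eq by (auto simp: pmult_pclass append_in_words)

lemma embX_eq: "embX act e = pclass [Inr e]"
  unfolding embX_def pclass_def ..

lemma embT_eq: "embT act t = pclass [Inl t]"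
  unfolding embT_def pclass_def ..

lemma embX_in_Pcar: "embX act e \<in> Pcar act"
  unfolding embX_eq Pcar_eq by (simp add: words_def)

lemma gens_subset_simP: "gens act \<subseteq> simP act"
  unfolding simP_def by (rule least_congruence_contains)

lemma pclass_gensI: "(u, v) \<in> gens act \<Longrightarrow> pclass (p @ u @ q) = pclass (p @ v @ q)"
  using gens_subset_simP by (intro pclass_eqI simP_in_context) blast

lemma pclass_Inl_Inl: "pclass (p @ [Inl s, Inl t] @ q) = pclass (p @ [Inl (s * t)] @ q)"
  by (rule pclass_gensI) (auto simp: gens_def)

lemma pclass_Inr_Inr: "pclass (p @ [Inr e, Inr f] @ q) = pclass (p @ [Inr (inf e f)] @ q)"
  by (rule pclass_gensI) (auto simp: gens_def)

lemma pclass_word_plus: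
  "w \<noteq> [] \<Longrightarrow> pclass (p @ (Inr (word_plus act w) # w) @ q) = pclass (p @ w @ q)"
  by (rule pclass_gensI) (auto simp: gens_def)

lemma pclass_Inl_one: "pclass (p @ [Inl 1] @ q) = pclass (p @ [Inr top] @ q)"
  by (rule pclass_gensI) (auto simp: gens_def)

lemma simP_t_proj: "(u, v) \<in> simP act \<Longrightarrow> t_proj u = t_proj v"
proof -
  have "congruence_on words (@) {(u, v). u \<in> words \<and> v \<in> words \<and> t_proj u = t_proj v}"
    by (rule congruence_on_kernel) (auto simp: append_in_words t_proj_append)
  moreover have "gens act \<subseteq> {(u, v). u \<in> words \<and> v \<in> words \<and> t_proj u = t_proj v}"
    by (auto simp: gens_def words_def)
  ultimately have "simP act \<subseteq> {(u, v). u \<in> words \<and> v \<in> words \<and> t_proj u = t_proj v}"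
    unfolding simP_def by (rule least_congruence_minimal)
  then show "(u, v) \<in> simP act \<Longrightarrow> t_proj u = t_proj v"
    by blast
qed

lemma class_t_proj_pclass: "w \<in> words \<Longrightarrow> class_t_proj (pclass w) = t_proj w"
proof -
  assume "w \<in> words"
  moreover have "t_proj v = t_proj w" if "v \<in> pclass w" for v
    using that simP_t_proj unfolding pclass_def by (metis Image_singleton_iff)
  ultimately have "t_proj ` pclass w = {t_proj w}"
    using pclass_self by blast
  then show ?thesis
    unfolding class_t_proj_def by simp
qed

lemma sigmaP_congruence: "congruence_on (Pcar act) (pmult act) (sigmaP act)"
  unfolding sigmaP_def
  by (rule congruence_on_least_congruence) (auto simp: pmult_in_Pcar embX_in_Pcar)

lemma embX_sigmaP: "(embX act e, embX act f) \<in> sigmaP act"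
  unfolding sigmaP_def by (rule subsetD[OF least_congruence_contains]) blast

lemma class_t_proj_pmult:
  assumes "A \<in> Pcar act" "B \<in> Pcar act"
  shows "class_t_proj (pmult act A B) = class_t_proj A * class_t_proj B"
proof -
  obtain u v where "u \<in> words" "v \<in> words" "A = pclass u" "B = pclass v"
    using assms unfolding Pcar_eq by blast
  then show ?thesis
    by (simp add: pmult_pclass class_t_proj_pclass append_in_words t_proj_append)
qed

lemma sigmaP_class_t_proj: "(A, B) \<in> sigmaP act \<Longrightarrow> class_t_proj A = class_t_proj B"
proof -
  let ?ker = "{(A, B). A \<in> Pcar act \<and> B \<in> Pcar act \<and> class_t_proj A = class_t_proj B}"
  have "congruence_on (Pcar act) (pmult act) ?ker"
    by (rule congruence_on_kernel) (simp_all add: pmult_in_Pcar class_t_proj_pmult)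
  moreover have "{(embX act e, embX act f) | e f. True} \<subseteq> ?ker"
    using embX_in_Pcar by (auto simp: embX_eq class_t_proj_pclass words_def)
  ultimately have "sigmaP act \<subseteq> ?ker"
    unfolding sigmaP_def by (rule least_congruence_minimal)
  then show "(A, B) \<in> sigmaP act \<Longrightarrow> class_t_proj A = class_t_proj B"
    by blast
qed

lemma pmult_pclass_embX:
  "pmult act (pclass [Inl t, Inr e]) (embX act f) = pclass [Inl t, Inr (inf e f)]"
  using pmult_pclass[of "[Inl t, Inr e]" "[Inr f]"] pclass_Inr_Inr[of "[Inl t]" e f "[]"]
  by (simp add: embX_eq words_def)

lemma pmult_pclass_act:
  "pmult act (pclass [Inl t, Inr (act s h)]) (pclass [Inl s, Inr h]) = pclass [Inl (t * s), Inr h]"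
proof -
  have "word_plus act [Inl s, Inr h] = act s h"
    by (simp add: word_plus_def)
  then have "pmult act (pclass [Inl t, Inr (act s h)]) (pclass [Inl s, Inr h])
      = pclass ([Inl t] @ (Inr (word_plus act [Inl s, Inr h]) # [Inl s, Inr h]) @ [])"
    by (simp add: pmult_pclass words_def)
  also have "\<dots> = pclass ([] @ [Inl t, Inl s] @ [Inr h])"
    by (subst pclass_word_plus) simp_all
  also have "\<dots> = pclass [Inl (t * s), Inr h]"
    by (subst pclass_Inl_Inl) simp
  finally show ?thesis .
qed

lemma HQ_eq: "HQ act Y = {pclass [Inl t, Inr e] | t e. e \<in> Y \<and> act t e \<in> Y}"
  unfolding HQ_def embT_eq embX_eq using pmult_pclass[of "[Inl _]" "[Inr _]"]
  by (simp add: words_def)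

lemma Qcar_mult: "a \<in> Qcar act Y \<Longrightarrow> b \<in> Qcar act Y \<Longrightarrow> pmult act a b \<in> Qcar act Y"
  unfolding Qcar_def by blast

lemma pclass_in_Qcar: "e \<in> Y \<Longrightarrow> act t e \<in> Y \<Longrightarrow> pclass [Inl t, Inr e] \<in> Qcar act Y"
  unfolding Qcar_def HQ_eq by blast

lemma Qcar_induct [consumes 1, case_names generator mult]:
  assumes "\<alpha> \<in> Qcar act Y"
    and "\<And>t e. e \<in> Y \<Longrightarrow> act t e \<in> Y \<Longrightarrow> P (pclass [Inl t, Inr e])"
    and "\<And>a b. a \<in> Qcar act Y \<Longrightarrow> b \<in> Qcar act Y \<Longrightarrow> P a \<Longrightarrow> P b \<Longrightarrow> P (pmult act a b)"
  shows "P \<alpha>"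
proof -
  have "HQ act Y \<subseteq> {a \<in> Qcar act Y. P a}"
    using assms(2) pclass_in_Qcar unfolding HQ_eq by blast
  moreover have "\<forall>a \<in> {a \<in> Qcar act Y. P a}. \<forall>b \<in> {a \<in> Qcar act Y. P a}.
      pmult act a b \<in> {a \<in> Qcar act Y. P a}"
    using assms(3) Qcar_mult by blast
  ultimately have "Qcar act Y \<subseteq> {a \<in> Qcar act Y. P a}"
    unfolding Qcar_def[of act Y] by (intro Inter_lower) blast
  then show ?thesis
    using assms(1) by blast
qed

lemma Qcar_subset_Pcar: "Qcar act Y \<subseteq> Pcar act"
proof
  fix \<alpha> assume "\<alpha> \<in> Qcar act Y"
  then show "\<alpha> \<in> Pcar act"
    by (induction rule: Qcar_induct) (simp_all add: pclass_in_Pcar words_def pmult_in_Pcar)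
qed

context
  fixes Y :: "'x set"
  assumes act_one: "\<And>x. act 1 x = x"
begin

lemma embX_in_Qcar: "e \<in> Y \<Longrightarrow> embX act e \<in> Qcar act Y"
proof -
  have "pclass [Inl 1, Inr e] = pclass ([] @ [Inr top, Inr e] @ [])"
    using pclass_Inl_one[of "[]" "[Inr e]"] by simp
  also have "\<dots> = embX act e"
    by (subst pclass_Inr_Inr) (simp add: embX_eq)
  finally show "e \<in> Y \<Longrightarrow> embX act e \<in> Qcar act Y"
    using pclass_in_Qcar[where t = 1] act_one by metis
qed

lemma sigmaQ_congruence: "congruence_on (Qcar act Y) (pmult act) (sigmaQ act Y)"
  unfolding sigmaQ_def
  by (rule congruence_on_least_congruence) (auto simp: Qcar_mult embX_in_Qcar)

lemma embX_sigmaQ: "e \<in> Y \<Longrightarrow> f \<in> Y \<Longrightarrow> (embX act e, embX act f) \<in> sigmaQ act Y"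
  unfolding sigmaQ_def by (rule subsetD[OF least_congruence_contains]) blast

lemma sigmaQ_subset_sigmaP: "sigmaQ act Y \<subseteq> sigmaP act"
  unfolding sigmaQ_def
  by (rule least_congruence_subset_restrict[OF sigmaP_congruence Qcar_subset_Pcar Qcar_mult])
    (auto simp: embX_sigmaP embX_in_Qcar)

lemma sigmaQ_refl: "a \<in> Qcar act Y \<Longrightarrow> (a, a) \<in> sigmaQ act Y"
  using congruence_on_equiv[OF sigmaQ_congruence] by (auto simp: equiv_def refl_on_def)

lemma sigmaQ_sym: "(a, b) \<in> sigmaQ act Y \<Longrightarrow> (b, a) \<in> sigmaQ act Y"
  using congruence_on_equiv[OF sigmaQ_congruence] by (auto simp: equiv_def sym_def)

lemma sigmaQ_trans:
  "(a, b) \<in> sigmaQ act Y \<Longrightarrow> (b, c) \<in> sigmaQ act Y \<Longrightarrow> (a, c) \<in> sigmaQ act Y"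
  using congruence_on_equiv[OF sigmaQ_congruence] unfolding equiv_def trans_def by blast

lemma sigmaQ_mult:
  "(a, a') \<in> sigmaQ act Y \<Longrightarrow> (b, b') \<in> sigmaQ act Y \<Longrightarrow>
    (pmult act a b, pmult act a' b') \<in> sigmaQ act Y"
  by (rule congruence_on_compat[OF sigmaQ_congruence])

lemma sigmaQ_same_t:
  assumes "e \<in> Y" "f \<in> Y" "act t e \<in> Y" "act t f \<in> Y"
  shows "(pclass [Inl t, Inr e], pclass [Inl t, Inr f]) \<in> sigmaQ act Y"
proof -
  have "(pclass [Inl t, Inr a], pclass [Inl t, Inr (inf a b)]) \<in> sigmaQ act Y"
    if "a \<in> Y" "b \<in> Y" "act t a \<in> Y" for a b
  proof -
    have "(pmult act (pclass [Inl t, Inr a]) (embX act a),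
        pmult act (pclass [Inl t, Inr a]) (embX act b)) \<in> sigmaQ act Y"
      using sigmaQ_mult[OF sigmaQ_refl embX_sigmaQ] pclass_in_Qcar that by blast
    then show ?thesis
      by (simp add: pmult_pclass_embX)
  qed
  from this[of e f] this[of f e]
  have "(pclass [Inl t, Inr e], pclass [Inl t, Inr (inf e f)]) \<in> sigmaQ act Y"
    "(pclass [Inl t, Inr f], pclass [Inl t, Inr (inf e f)]) \<in> sigmaQ act Y"
    using assms by (simp_all add: inf_commute)
  then show ?thesis
    using sigmaQ_sym sigmaQ_trans by blast
qed

context
  assumes act_mult: "\<And>s t x. act (s * t) x = act s (act t x)"
    and Y_inf: "\<And>e f. e \<in> Y \<Longrightarrow> f \<in> Y \<Longrightarrow> inf e f \<in> Y"
    and condA: "\<And>t e f. e \<in> Y \<Longrightarrow> f \<in> Y \<Longrightarrow> e \<le> f \<Longrightarrow> act t f \<in> Y \<Longrightarrow> act t e \<in> Y"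
    and condB: "\<And>t. \<exists>g\<in>Y. act t g \<in> Y"
begin

lemma sigmaQ_pmult_generators:
  assumes "e \<in> Y" "act t e \<in> Y" "f \<in> Y" "act s f \<in> Y"
  obtains h where "h \<in> Y" "act (t * s) h \<in> Y"
    "(pmult act (pclass [Inl t, Inr e]) (pclass [Inl s, Inr f]), pclass [Inl (t * s), Inr h])
      \<in> sigmaQ act Y"
proof -
  obtain g where g: "g \<in> Y" "act (t * s) g \<in> Y"
    using condB by blast
  define h where "h = inf f g"
  have h: "h \<in> Y" "act s h \<in> Y" "act t (act s h) \<in> Y"
    using Y_inf condA[of h f s] condA[of h g "t * s"] assms g act_mult unfolding h_def by auto
  have "(pclass [Inl t, Inr e], pclass [Inl t, Inr (act s h)]) \<in> sigmaQ act Y"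
    using sigmaQ_same_t assms h by blast
  moreover have "(pclass [Inl s, Inr f], pclass [Inl s, Inr h]) \<in> sigmaQ act Y"
    using sigmaQ_same_t assms h by blast
  ultimately have "(pmult act (pclass [Inl t, Inr e]) (pclass [Inl s, Inr f]),
      pclass [Inl (t * s), Inr h]) \<in> sigmaQ act Y"
    using sigmaQ_mult pmult_pclass_act by metis
  then show thesis
    using that h act_mult by simp
qed

lemma sigmaQ_normal_form:
  assumes "\<alpha> \<in> Qcar act Y"
  obtains t e where "e \<in> Y" "act t e \<in> Y" "(\<alpha>, pclass [Inl t, Inr e]) \<in> sigmaQ act Y"
  using assms
proof (induction arbitrary: thesis rule: Qcar_induct)
  case (generator t e)
  then show ?case
    using sigmaQ_refl pclass_in_Qcar by blast
next
  case (mult a b)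
  obtain t e where te: "e \<in> Y" "act t e \<in> Y" "(a, pclass [Inl t, Inr e]) \<in> sigmaQ act Y"
    using mult.IH(1) by blast
  obtain s f where sf: "f \<in> Y" "act s f \<in> Y" "(b, pclass [Inl s, Inr f]) \<in> sigmaQ act Y"
    using mult.IH(2) by blast
  obtain h where "h \<in> Y" "act (t * s) h \<in> Y"
    "(pmult act (pclass [Inl t, Inr e]) (pclass [Inl s, Inr f]), pclass [Inl (t * s), Inr h])
      \<in> sigmaQ act Y"
    using sigmaQ_pmult_generators te sf by blast
  then show ?case
    using mult.prems sigmaQ_mult[OF te(3) sf(3)] sigmaQ_trans by blast
qed

lemma sigmaP_imp_sigmaQ:
  assumes "\<alpha> \<in> Qcar act Y" "\<beta> \<in> Qcar act Y" "(\<alpha>, \<beta>) \<in> sigmaP act"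
  shows "(\<alpha>, \<beta>) \<in> sigmaQ act Y"
proof -
  obtain t e where te: "e \<in> Y" "act t e \<in> Y" "(\<alpha>, pclass [Inl t, Inr e]) \<in> sigmaQ act Y"
    using sigmaQ_normal_form[OF assms(1)] by blast
  obtain s f where sf: "f \<in> Y" "act s f \<in> Y" "(\<beta>, pclass [Inl s, Inr f]) \<in> sigmaQ act Y"
    using sigmaQ_normal_form[OF assms(2)] by blast
  have "class_t_proj (pclass [Inl t, Inr e]) = class_t_proj (pclass [Inl s, Inr f])"
    using te(3) sf(3) assms(3) sigmaQ_subset_sigmaP sigmaP_class_t_proj by (metis subsetD)
  then have "t = s"
    by (simp add: class_t_proj_pclass words_def)
  then have "(pclass [Inl t, Inr e], pclass [Inl s, Inr f]) \<in> sigmaQ act Y"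
    using sigmaQ_same_t te sf by blast
  then show ?thesis
    using te(3) sf(3) sigmaQ_sym sigmaQ_trans by blast
qed

end

end

end

theorem mainTheorem17:
  fixes act :: "'a::monoid_mult \<Rightarrow> 'x::bounded_semilattice_inf_top \<Rightarrow> 'x"
    and Y :: "'x set"
  assumes act_one: "\<And>x. act 1 x = x"
    and act_mult: "\<And>s t x. act (s * t) x = act s (act t x)"
    and act_mono: "\<And>t e f. e \<le> f \<Longrightarrow> act t e \<le> act t f"
    and Y_sub: "\<And>e f. e \<in> Y \<Longrightarrow> f \<in> Y \<Longrightarrow> inf e f \<in> Y"
    and Y_id: "\<exists>i\<in>Y. \<forall>e\<in>Y. inf i e = e"
    and condA: "\<And>t e f. e \<in> Y \<Longrightarrow> f \<in> Y \<Longrightarrow> e \<le> f \<Longrightarrow> act t f \<in> Y \<Longrightarrow> act t e \<in> Y"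
    and condB: "\<And>t. \<exists>g\<in>Y. act t g \<in> Y"
    and \<alpha>Q: "\<alpha> \<in> Qcar act Y"
    and \<beta>Q: "\<beta> \<in> Qcar act Y"
  shows "(\<alpha>, \<beta>) \<in> sigmaQ act Y \<longleftrightarrow> (\<alpha>, \<beta>) \<in> sigmaP act"
proof
  show "(\<alpha>, \<beta>) \<in> sigmaQ act Y \<Longrightarrow> (\<alpha>, \<beta>) \<in> sigmaP act"
    using sigmaQ_subset_sigmaP[where act = act and Y = Y] act_one by blast
next
  assume "(\<alpha>, \<beta>) \<in> sigmaP act"
  then show "(\<alpha>, \<beta>) \<in> sigmaQ act Y"
    using sigmaP_imp_sigmaQ[where act = act and Y = Y] assms by blast
qed

end
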